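(* Let $1<p\le s<\infty$ and $x\in\ell^{p,s}$. Then $$\zeta\!\left(\tfrac{s}{p'}+1\right)^{1/s}\|x\|_{p,s}\;\le\;\|x\|^*_{p,s}\;\le\;p'\,\|x\|_{p,s},$$ where $\zeta$ is the Riemann zeta function and $1/p+1/p'=1$. Both constants are optimal.
   Context: For a complex sequence $x=(x_n)_{n\ge1}$, $x^*$ denotes the nonincreasing rearrangement of $(|x_n|)_n$. For $1<p<\infty$, $1\le s<\infty$: $\|x\|_{p,s}=\bigl(\sum_{n=1}^\infty n^{s/p-1}(x_n^* )^s\bigr)^{1/s}$, and $\ell^{p,s}$ is the space of sequences with $\|x\|_{p,s}<\infty$. The maximal Lorentz norm is $\|x\|^*_{p,s}=\bigl(\sum_{n=1}^\infty n^{s/p-1}\bigl(\frac1n\sum_{k=1}^n x_k^*\bigr)^s\bigr)^{1/s}$. Here $1/p+1/p'=1$. *)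

theory Defs
  imports "HOL-Analysis.Analysis"
begin

text \<open>Sequences x = (x_n)_{n>=1} are modelled as functions nat => complex;
  the value at index 0 is ignored.\<close>

definition dist_count :: "(nat \<Rightarrow> complex) \<Rightarrow> real \<Rightarrow> nat set" where
  "dist_count x t = {k. 1 \<le> k \<and> t < norm (x k)}"

definition rearr :: "(nat \<Rightarrow> complex) \<Rightarrow> nat \<Rightarrow> real" where
  "rearr x n = Inf {t. 0 \<le> t \<and> finite (dist_count x t) \<and> card (dist_count x t) < n}"

definition lorentz_terms :: "real \<Rightarrow> real \<Rightarrow> (nat \<Rightarrow> complex) \<Rightarrow> nat \<Rightarrow> real" where
  "lorentz_terms p s x n = real (Suc n) powr (s / p - 1) * (rearr x (Suc n)) powr s"

definition lorentz_norm :: "real \<Rightarrow> real \<Rightarrow> (nat \<Rightarrow> complex) \<Rightarrow> real" where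
  "lorentz_norm p s x = (\<Sum>n. lorentz_terms p s x n) powr (1 / s)"

text \<open>Membership in l^{p,s}; the condition x_n -> 0 is automatic for finite norm
  (otherwise x* is bounded below by a positive constant and the series diverges),
  and it guarantees that the rearrangement is well defined.\<close>
definition in_lorentz :: "real \<Rightarrow> real \<Rightarrow> (nat \<Rightarrow> complex) \<Rightarrow> bool" where
  "in_lorentz p s x \<longleftrightarrow> ((\<lambda>n. norm (x n)) \<longlonglongrightarrow> 0) \<and> summable (lorentz_terms p s x)"

definition max_lorentz_terms :: "real \<Rightarrow> real \<Rightarrow> (nat \<Rightarrow> complex) \<Rightarrow> nat \<Rightarrow> real" where
  "max_lorentz_terms p s x n = real (Suc n) powr (s / p - 1) *
     ((\<Sum>k=1..Suc n. rearr x k) / real (Suc n)) powr s"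

definition max_lorentz_norm :: "real \<Rightarrow> real \<Rightarrow> (nat \<Rightarrow> complex) \<Rightarrow> real" where
  "max_lorentz_norm p s x = (\<Sum>n. max_lorentz_terms p s x n) powr (1 / s)"

definition zeta_real :: "real \<Rightarrow> real" where
  "zeta_real a = (\<Sum>n. 1 / real (Suc n) powr a)"

definition conj_exp :: "real \<Rightarrow> real" where
  "conj_exp p = p / (p - 1)"

end

theory Submission
  imports Defs
begin

text \<open>Write \<open>a\<close> for the nonincreasing rearrangement of \<open>x\<close>, \<open>b\<close> for its Cesaro means,
  \<open>r = s / p\<close> and \<open>q = p'\<close>. The upper bound is a weighted Hardy inequality: with
  \<open>F n = n powr r * b n powr s\<close>, convexity (Bernoulli and Young) gives the one-step estimate
  \<open>n powr (r - 1) * (b n powr s - q * a n * b n powr (s - 1)) \<le> q / s * (F (n - 1) - F n)\<close>,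
  which telescopes, and Young's inequality absorbs the mixed term. For the lower bound, \<open>a powr s\<close>
  is a sum of nonnegative layers \<open>a j powr s - a (j + 1) powr s\<close>; by convexity of \<open>t powr s\<close> the
  maximal sum dominates the same combination of the maximal sums of the indicators of \<open>{1..j}\<close>,
  for which the comparison with \<open>\<zeta>(s / p' + 1)\<close> is an explicit computation with the tail of the
  zeta series. The unit vector attains the lower constant, and the truncations of \<open>k powr (-1/p)\<close>
  have ratio tending to \<open>p'\<close>, because their norms are governed by the divergent harmonic sums.\<close>

section \<open>Elementary inequalities\<close>

lemma Bernoulli_powr_concave:
  fixes b x :: real
  assumes "0 \<le> b" "b \<le> 1" "-1 < x"
  shows "(1 + x) powr b \<le> 1 + b * x"
  using Youngs_inequality_0[of b "1 - b" "1 + x" 1] assms by (simp add: algebra_simps)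

lemma Bernoulli_powr:
  fixes s x :: real
  assumes "1 \<le> s" "-1 \<le> x"
  shows "1 + s * x \<le> (1 + x) powr s"
proof (cases "x = -1")
  case False
  define u where "u = (1 + x) powr s"
  have "u > 0" using assms False by (simp add: u_def)
  then have "u powr (1 / s) \<le> 1 + (1 / s) * (u - 1)"
    using Bernoulli_powr_concave[of "1 / s" "u - 1"] assms by simp
  moreover have "u powr (1 / s) = 1 + x"
    using assms False by (simp add: u_def powr_powr)
  ultimately show ?thesis
    using assms by (simp add: u_def field_simps)
qed (use assms in simp)

lemma mult_powr_Bernoulli_le:
  fixes s c t y :: real
  assumes "1 \<le> s" "0 \<le> c" "0 \<le> t" "t \<le> 1" "c * (1 - t) \<le> y"
  shows "c powr s * (1 - s * t) \<le> y powr s"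
proof -
  have "c powr s * (1 - s * t) \<le> c powr s * (1 - t) powr s"
    using Bernoulli_powr[of s "- t"] assms by (intro mult_left_mono) auto
  also have "\<dots> = (c * (1 - t)) powr s"
    using assms by (simp add: powr_mult)
  also have "\<dots> \<le> y powr s"
    using assms by (intro powr_mono2) auto
  finally show ?thesis .
qed

lemma Youngs_inequality_weighted:
  fixes s lam x y :: real
  assumes "1 < s" "0 < lam" "0 \<le> x" "0 \<le> y"
  shows "x powr (s - 1) * y \<le> (s - 1) / s * lam * x powr s + lam powr (1 - s) / s * y powr s"
proof (cases "x = 0 \<or> y = 0")
  case False
  then have "0 < x" "0 < y" using assms by auto
  have "(lam * x powr s) powr ((s - 1) / s) * (lam powr (1 - s) * y powr s) powr (1 / s)
      = lam powr ((s - 1) / s + (1 - s) / s) * x powr (s - 1) * y"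
    using assms \<open>0 < x\<close> \<open>0 < y\<close> by (simp add: powr_mult powr_powr powr_add)
  also have "(s - 1) / s + (1 - s) / s = 0"
    by (simp add: add_divide_distrib[symmetric])
  finally show ?thesis
    using Youngs_inequality_0[of "(s - 1) / s" "1 / s" "lam * x powr s" "lam powr (1 - s) * y powr s"]
      assms \<open>0 < x\<close> \<open>0 < y\<close> by (simp add: field_simps)
qed (use assms in auto)

lemma Youngs_inequality_conj:
  fixes s q a b :: real
  assumes "1 < s" "0 < q" "0 \<le> a" "0 \<le> b"
  shows "q * a * b powr (s - 1) \<le> (s - 1) / s * b powr s + q powr s / s * a powr s"
proof -
  have "b powr (s - 1) * a \<le> (s - 1) / s * (1 / q) * b powr s + (1 / q) powr (1 - s) / s * a powr s"
    using assms by (intro Youngs_inequality_weighted) auto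
  then have "q * (b powr (s - 1) * a)
      \<le> q * ((s - 1) / s * (1 / q) * b powr s + (1 / q) powr (1 - s) / s * a powr s)"
    by (rule mult_left_mono) (use assms in simp)
  also have "q powr s = q * (1 / q) powr (1 - s)"
    using assms powr_mult_base[of q "s - 1"] by (simp add: powr_divide powr_diff)
  then have "q * ((s - 1) / s * (1 / q) * b powr s + (1 / q) powr (1 - s) / s * a powr s)
      = (s - 1) / s * b powr s + q powr s / s * a powr s"
    using assms by (simp add: algebra_simps) (simp add: field_simps)
  finally show ?thesis
    by (simp add: mult_ac)
qed

lemma powr_eq_mult_powr_minus_one: "0 \<le> (x::real) \<Longrightarrow> 0 < s \<Longrightarrow> x powr s = x * x powr (s - 1)"
  using powr_mult_base[of x "s - 1"] by (cases "x = 0") auto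

lemma powr_increment_mono:
  fixes s u v d :: real
  assumes "1 \<le> s" "0 < u" "u \<le> v" "0 < d"
  shows "(u + d) powr s - u powr s \<le> (v + d) powr s - v powr s"
proof -
  let ?f = "\<lambda>t::real. t powr s"
  define slope where "slope = (?f (v + d) - ?f u) / (v + d - u)"
  have convex: "convex_on {u..v + d} ?f"
    using assms by (intro convex_on_subset[OF powr_convex]) auto
  have "?f (u + d) \<le> slope * (u + d - u) + ?f u"
    using convex_onD_Icc'[OF convex, of "u + d"] assms by (simp add: slope_def)
  moreover have "?f v \<le> slope * (v - u) + ?f u"
    using convex_onD_Icc'[OF convex, of v] assms by (simp add: slope_def)
  moreover have "slope * (u + d - u) + slope * (v - u) = slope * (v + d - u)"
    by (simp add: algebra_simps)
  moreover have "slope * (v + d - u) = ?f (v + d) - ?f u"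
    using assms by (simp add: slope_def)
  ultimately show ?thesis by linarith
qed

lemma sum_powr_le:
  assumes "0 \<le> e"
  shows "(\<Sum>k=1..j. real k powr e) \<le> real j powr (e + 1)"
proof (cases "j = 0")
  case False
  have "(\<Sum>k=1..j. real k powr e) \<le> real j * real j powr e"
    using sum_bounded_above[of "{1..j}" "\<lambda>k. real k powr e"] assms by (simp add: powr_mono2)
  also have "\<dots> = real j powr (e + 1)"
    using False powr_mult_base[of "real j" e] by (simp add: add.commute)
  finally show ?thesis .
qed simp

lemma sum_powr_ge_integral:
  fixes g :: real
  assumes "0 < g" "g \<le> 1"
  shows "(real (m + 1) powr g - 1) / g \<le> (\<Sum>k=1..m. real k powr (g - 1))"
proof (induction m)
  case (Suc m)
  define k where "k = real (m + 1)"
  have "1 \<le> k" by (simp add: k_def)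
  have "0 < 1 / k" using \<open>1 \<le> k\<close> by simp
  then have "-1 < 1 / k" by linarith
  have "k + 1 = k * (1 + 1 / k)"
    using \<open>1 \<le> k\<close> by (simp add: field_simps)
  then have "(k + 1) powr g = k powr g * (1 + 1 / k) powr g"
    using \<open>1 \<le> k\<close> by (simp add: powr_mult)
  also have "\<dots> \<le> k powr g * (1 + g * (1 / k))"
    using Bernoulli_powr_concave[OF _ assms(2) \<open>-1 < 1 / k\<close>] assms by (intro mult_left_mono) auto
  also have "\<dots> = k powr g + g * k powr (g - 1)"
    using \<open>1 \<le> k\<close> by (simp add: powr_diff algebra_simps)
  finally have "((k + 1) powr g - k powr g) / g \<le> k powr (g - 1)"
    using assms by (simp add: field_simps)
  with Suc.IH show ?case
    by (simp add: k_def add_divide_distrib diff_divide_distrib algebra_simps)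
qed simp

lemma sum_powr_increments_le:
  fixes a :: "nat \<Rightarrow> real" and s :: real
  assumes "1 \<le> s" and a: "\<And>k. 1 \<le> k \<Longrightarrow> 0 \<le> a k"
    and anti: "\<And>i j. 1 \<le> i \<Longrightarrow> i \<le> j \<Longrightarrow> a j \<le> a i"
  shows "(\<Sum>k=1..n. (real k powr s - real (k - 1) powr s) * a k powr s) \<le> (\<Sum>k=1..n. a k) powr s"
proof (induction n)
  case (Suc n)
  define A where "A = (\<Sum>k=1..n. a k)"
  define b where "b = a (Suc n)"
  have "0 \<le> b" by (simp add: b_def a)
  have increment: "(real (Suc n) powr s - real n powr s) * b powr s \<le> (A + b) powr s - A powr s"
  proof (cases "n = 0 \<or> b = 0")
    case True
    then show ?thesis using \<open>1 \<le> s\<close> by (auto simp: A_def)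
  next
    case False
    then have "0 < real n * b" using \<open>0 \<le> b\<close> by simp
    moreover have "real n * b \<le> A"
      using sum_bounded_below[of "{1..n}" b a] anti by (simp add: A_def b_def)
    ultimately have "(real n * b + b) powr s - (real n * b) powr s \<le> (A + b) powr s - A powr s"
      using powr_increment_mono \<open>1 \<le> s\<close> \<open>0 \<le> b\<close> False by simp
    moreover have "real n * b + b = real (Suc n) * b"
      by (simp add: algebra_simps)
    ultimately show ?thesis
      using \<open>0 \<le> b\<close> by (simp add: powr_mult left_diff_distrib)
  qed
  have "(\<Sum>k=1..Suc n. (real k powr s - real (k - 1) powr s) * a k powr s)
      \<le> A powr s + (real (Suc n) powr s - real n powr s) * b powr s"
    using Suc.IH by (simp add: A_def b_def)
  also have "\<dots> \<le> (A + b) powr s"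
    using increment by simp
  finally show ?case
    by (simp add: A_def b_def)
qed (use \<open>1 \<le> s\<close> in simp)

lemma sum_mult_layer_decomposition:
  fixes u c :: "nat \<Rightarrow> 'a::comm_ring"
  assumes "\<And>k. N < k \<Longrightarrow> c k = 0"
  shows "(\<Sum>k=1..n. u k * c k) = (\<Sum>j=1..N. (c j - c (Suc j)) * (\<Sum>k=1..min n j. u k))"
proof -
  have layers: "c k = (\<Sum>j\<in>{j\<in>{1..N}. k \<le> j}. c j - c (Suc j))" if "1 \<le> k" for k
  proof (cases "k \<le> N")
    case True
    then have "{j\<in>{1..N}. k \<le> j} = {k..N}" using that by auto
    then show ?thesis
      using sum_Suc_diff[of k N "\<lambda>j. - c j"] True assms[of "Suc N"] by simp
  next
    case False
    then have no_layers: "{j\<in>{1..N}. k \<le> j} = {}" by auto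
    show ?thesis unfolding no_layers using assms[of k] False by simp
  qed
  have "(\<Sum>k=1..n. u k * c k) = (\<Sum>k\<in>{1..n}. \<Sum>j\<in>{j\<in>{1..N}. k \<le> j}. u k * (c j - c (Suc j)))"
  proof (rule sum.cong)
    fix k assume "k \<in> {1..n}"
    then show "u k * c k = (\<Sum>j\<in>{j\<in>{1..N}. k \<le> j}. u k * (c j - c (Suc j)))"
      using layers[of k] by (simp add: sum_distrib_left)
  qed simp
  also have "\<dots> = (\<Sum>j\<in>{1..N}. \<Sum>k\<in>{k\<in>{1..n}. k \<le> j}. u k * (c j - c (Suc j)))"
    by (rule sum.swap_restrict) simp_all
  also have "\<dots> = (\<Sum>j=1..N. (c j - c (Suc j)) * (\<Sum>k=1..min n j. u k))"
  proof (rule sum.cong)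
    fix j
    have "{k\<in>{1..n}. k \<le> j} = {1..min n j}" by auto
    then show "(\<Sum>k\<in>{k\<in>{1..n}. k \<le> j}. u k * (c j - c (Suc j)))
        = (c j - c (Suc j)) * (\<Sum>k=1..min n j. u k)"
      by (simp add: sum_distrib_left mult.commute)
  qed simp
  finally show ?thesis .
qed

lemma sum_layers_powr_le:
  fixes a :: "nat \<Rightarrow> real"
  assumes "1 \<le> s" and a: "\<And>k. 1 \<le> k \<Longrightarrow> 0 \<le> a k"
    and anti: "\<And>i j. 1 \<le> i \<Longrightarrow> i \<le> j \<Longrightarrow> a j \<le> a i"
    and vanish: "\<And>k. N < k \<Longrightarrow> a k = 0"
  shows "(\<Sum>j=1..N. (a j powr s - a (Suc j) powr s) * real (min n j) powr s) \<le> (\<Sum>k=1..n. a k) powr s"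
proof -
  have "(\<Sum>j=1..N. (a j powr s - a (Suc j) powr s) * real (min n j) powr s)
      = (\<Sum>j=1..N. (a j powr s - a (Suc j) powr s) * (\<Sum>k=1..min n j. real k powr s - real (k - 1) powr s))"
    using sum_telescope''[of 0 _ "\<lambda>k. real k powr s"] \<open>1 \<le> s\<close> by simp
  also have "\<dots> = (\<Sum>k=1..n. (real k powr s - real (k - 1) powr s) * a k powr s)"
    using vanish by (intro sum_mult_layer_decomposition[symmetric]) simp
  also have "\<dots> \<le> (\<Sum>k=1..n. a k) powr s"
    by (rule sum_powr_increments_le) (use assms in auto)
  finally show ?thesis .
qed

section \<open>The conjugate exponent and the zeta function\<close>

lemma conj_exp_pos: "1 < p \<Longrightarrow> 0 < conj_exp p"
  by (simp add: conj_exp_def)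

lemma conj_exp_divide: "1 < p \<Longrightarrow> conj_exp p / p = conj_exp p - 1"
  by (simp add: conj_exp_def field_simps)

lemma divide_conj_exp: "1 < p \<Longrightarrow> s / conj_exp p = s - s / p"
  by (simp add: conj_exp_def field_simps)

lemma one_minus_conj_exp_le:
  assumes "1 < p" "p \<le> s"
  shows "1 - conj_exp p \<le> - conj_exp p / s"
proof -
  have "0 \<le> (conj_exp p - 1) * (s - p)"
    using assms by (simp add: conj_exp_def)
  then have "conj_exp p + s \<le> conj_exp p * s"
    using conj_exp_divide[OF assms(1)] assms(1) by (simp add: field_simps)
  then show ?thesis
    using assms by (simp add: field_simps)
qed

lemma summable_powr_shift: "1 < al \<Longrightarrow> summable (\<lambda>n. real (n + k) powr - al)"
  using summable_ignore_initial_segment[of "\<lambda>n. real n powr - al" k]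
  by (simp add: summable_real_powr_iff)

lemma summable_powr_min:
  assumes "1 < al" "0 \<le> s"
  shows "summable (\<lambda>n. real (Suc n) powr - al * real (min (Suc n) j) powr s)"
proof (rule summable_comparison_test')
  show "summable (\<lambda>n. real j powr s * real (n + 1) powr - al)"
    using summable_powr_shift[OF \<open>1 < al\<close>] by (rule summable_mult)
  show "norm (real (Suc n) powr - al * real (min (Suc n) j) powr s) \<le> real j powr s * real (n + 1) powr - al"
    for n
    using assms by (simp add: mult_right_mono powr_mono2)
qed

lemma zeta_real_sums: "1 < al \<Longrightarrow> (\<lambda>n. real (Suc n) powr - al) sums zeta_real al"
  using summable_powr_shift[of al 1]
  by (simp add: zeta_real_def powr_minus_divide summable_sums)

lemma zeta_real_minus_one_sums: "1 < al \<Longrightarrow> (\<lambda>n. real (n + 2) powr - al) sums (zeta_real al - 1)"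
  using sums_Suc_iff[of "\<lambda>n. real (Suc n) powr - al"] zeta_real_sums[of al]
  by (simp add: algebra_simps)

lemma zeta_real_ge_one: "1 < al \<Longrightarrow> 1 \<le> zeta_real al"
  using sums_le[of "\<lambda>_. 0" _ 0, OF _ sums_zero zeta_real_minus_one_sums] by simp

text \<open>Grouping the tail into blocks of length \<open>j\<close> compares it with \<open>\<zeta>(al) - 1\<close>.\<close>
lemma zeta_real_tail_ge:
  assumes "1 < al" "1 \<le> j"
  shows "real j powr (1 - al) * (zeta_real al - 1) \<le> (\<Sum>n. real (n + j + 1) powr - al)"
proof -
  define h where "h n = real (n + j + 1) powr - al" for n
  define block where "block m = (\<Sum>i\<in>{m * j..<m * j + j}. h i)" for m
  have "summable h"
    unfolding h_def using summable_powr_shift[of al "j + 1"] assms by (simp add: add.assoc)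
  then have block_sums: "block sums (\<Sum>n. h n)"
    unfolding block_def using assms by (intro sums_group summable_sums) simp_all
  have block_ge: "real j powr (1 - al) * real (m + 2) powr - al \<le> block m" for m
  proof -
    have "real ((m + 2) * j) powr - al \<le> h i" if "i \<in> {m * j..<m * j + j}" for i
    proof -
      have "i + j + 1 \<le> (m + 2) * j" using that by simp
      then have "real (i + j + 1) \<le> real ((m + 2) * j)" by (simp only: of_nat_le_iff)
      then show ?thesis unfolding h_def using assms by (intro powr_mono2') auto
    qed
    then have "of_nat (card {m * j..<m * j + j}) * real ((m + 2) * j) powr - al \<le> block m"
      unfolding block_def by (rule sum_bounded_below)
    then have "real j * real ((m + 2) * j) powr - al \<le> block m"
      by simp
    moreover have "real j * real ((m + 2) * j) powr - al = real j powr (1 - al) * real (m + 2) powr - al"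
      using assms by (simp only: of_nat_mult powr_mult of_nat_0_le_iff) (simp add: powr_diff powr_minus_divide)
    ultimately show ?thesis by simp
  qed
  have "(\<lambda>m. real j powr (1 - al) * real (m + 2) powr - al) sums (real j powr (1 - al) * (zeta_real al - 1))"
    by (rule sums_mult[OF zeta_real_minus_one_sums[OF assms(1)]])
  from sums_le[OF block_ge this block_sums] show ?thesis
    by (simp add: h_def)
qed

section \<open>Hardy's inequality for Lorentz sums\<close>

text \<open>Sequences are indexed from \<open>1\<close>, as for \<open>rearr\<close>, whose value at \<open>0\<close> is junk; note that
  \<open>cesaro_mean a 0 = 0\<close> and \<open>lorentz_summand p s a 0 = 0\<close>.\<close>
definition cesaro_mean :: "(nat \<Rightarrow> real) \<Rightarrow> nat \<Rightarrow> real" where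
  "cesaro_mean a n = (\<Sum>k=1..n. a k) / real n"

definition lorentz_summand :: "real \<Rightarrow> real \<Rightarrow> (nat \<Rightarrow> real) \<Rightarrow> nat \<Rightarrow> real" where
  "lorentz_summand p s a n = real n powr (s / p - 1) * a n powr s"

lemma cesaro_mean_nonneg: "(\<And>k. 1 \<le> k \<Longrightarrow> 0 \<le> a k) \<Longrightarrow> 0 \<le> cesaro_mean a n"
  unfolding cesaro_mean_def by (intro divide_nonneg_nonneg sum_nonneg) auto

lemma cesaro_mean_mono:
  "(\<And>k. 1 \<le> k \<Longrightarrow> k \<le> n \<Longrightarrow> b k \<le> a k) \<Longrightarrow> cesaro_mean b n \<le> cesaro_mean a n"
  unfolding cesaro_mean_def by (intro divide_right_mono sum_mono) auto

lemma cesaro_mean_increment: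
  assumes "1 \<le> n"
  shows "real n * cesaro_mean a n - real (n - 1) * cesaro_mean a (n - 1) = a n"
proof -
  obtain m where "n = Suc m" using assms by (cases n) auto
  then show ?thesis by (cases "m = 0") (simp_all add: cesaro_mean_def)
qed

lemma lorentz_summand_nonneg: "0 \<le> lorentz_summand p s a n"
  by (simp add: lorentz_summand_def)

lemma lorentz_summand_mono:
  "0 \<le> b n \<Longrightarrow> b n \<le> a n \<Longrightarrow> 0 \<le> s \<Longrightarrow> lorentz_summand p s b n \<le> lorentz_summand p s a n"
  unfolding lorentz_summand_def by (intro mult_left_mono powr_mono2) auto

lemma lorentz_summand_cesaro_mean:
  assumes "1 < p" "1 \<le> n" "0 \<le> (\<Sum>k=1..n. a k)"
  shows "lorentz_summand p s (cesaro_mean a) n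
           = real n powr - (s / conj_exp p + 1) * (\<Sum>k=1..n. a k) powr s"
proof -
  have "s / p - 1 - s = - (s / conj_exp p + 1)"
    using assms by (simp add: divide_conj_exp)
  then have "real n powr (s / p - 1) / real n powr s = real n powr - (s / conj_exp p + 1)"
    by (metis powr_diff)
  then show ?thesis
    using assms by (simp add: lorentz_summand_def cesaro_mean_def powr_divide flip: times_divide_eq_left)
qed

text \<open>With \<open>\<beta> = (r - 1) / (s - 1) \<in> [0, 1]\<close>, Bernoulli's inequality gives
  \<open>((m + 1) / m) powr \<beta> \<le> 1 + \<beta> / m\<close>; raise it to the power \<open>s - 1\<close>.\<close>
lemma hardy_weight_le:
  fixes r s m :: real
  assumes "1 < s" "1 \<le> r" "r \<le> s" "0 < m"
  shows "(m + 1) powr (r - 1) * (1 + (r - 1) / ((s - 1) * m)) powr (1 - s) \<le> m powr (r - 1)"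
proof -
  define \<beta> where "\<beta> = (r - 1) / (s - 1)"
  define lam where "lam = 1 + (r - 1) / ((s - 1) * m)"
  have "0 \<le> \<beta>" "\<beta> \<le> 1" using assms by (simp_all add: \<beta>_def field_simps)
  have "0 < lam" using assms by (simp add: lam_def add_pos_nonneg)
  have "0 < 1 / m" using assms by simp
  then have "-1 < 1 / m" by linarith
  then have "((m + 1) / m) powr \<beta> \<le> lam"
    using Bernoulli_powr_concave[of \<beta> "1 / m"] \<open>0 \<le> \<beta>\<close> \<open>\<beta> \<le> 1\<close> assms
    by (simp add: lam_def \<beta>_def add_divide_distrib)
  then have "(((m + 1) / m) powr \<beta>) powr (s - 1) \<le> lam powr (s - 1)"
    using assms by (intro powr_mono2) auto
  then have "(m + 1) powr (r - 1) / m powr (r - 1) \<le> lam powr (s - 1)"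
    using assms by (simp add: powr_powr \<beta>_def powr_divide)
  then have "(m + 1) powr (r - 1) * lam powr (1 - s) \<le> lam powr (s - 1) * lam powr (1 - s) * m powr (r - 1)"
    using assms \<open>0 < lam\<close> by (simp add: divide_le_eq mult_right_mono)
  also have "lam powr (s - 1) * lam powr (1 - s) = 1"
    using \<open>0 < lam\<close> by (simp flip: powr_add)
  finally show ?thesis by (simp add: lam_def)
qed

text \<open>The weight \<open>lam\<close> in Young's inequality is chosen so that the coefficient of \<open>B powr s\<close>
  becomes exactly \<open>- q * (m + 1) / s\<close>; \<open>hardy_weight_le\<close> then controls that of \<open>B' powr s\<close>.\<close>
lemma hardy_step_pos:
  fixes p s m B B' :: real
  assumes p: "1 < p" "p \<le> s" and "0 < m" "0 \<le> B" "0 \<le> B'"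
  shows "(m + 1) powr (s / p - 1) * B powr s
           - conj_exp p * (m + 1) powr (s / p - 1) * ((m + 1) * B - m * B') * B powr (s - 1)
         \<le> conj_exp p / s * (m powr (s / p) * B' powr s - (m + 1) powr (s / p) * B powr s)"
proof -
  define q where "q = conj_exp p"
  define r where "r = s / p"
  define w where "w = (m + 1) powr (r - 1)"
  define lam where "lam = 1 + (r - 1) / ((s - 1) * m)"
  have "1 < s" "0 < q" "1 \<le> r" "r \<le> s"
    using p by (simp_all add: q_def r_def conj_exp_pos field_simps)
  then have "0 < lam"
    using \<open>0 < m\<close> by (simp add: lam_def add_pos_nonneg)
  have B_powr: "B powr s = B * B powr (s - 1)"
    using \<open>0 \<le> B\<close> \<open>1 < s\<close> by (simp add: powr_eq_mult_powr_minus_one)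
  have Young: "B powr (s - 1) * B' \<le> (s - 1) / s * lam * B powr s + lam powr (1 - s) / s * B' powr s"
    using Youngs_inequality_weighted \<open>1 < s\<close> \<open>0 < lam\<close> assms by blast
  have weight: "w * lam powr (1 - s) \<le> m powr (r - 1)"
    using hardy_weight_le \<open>1 < s\<close> \<open>1 \<le> r\<close> \<open>r \<le> s\<close> \<open>0 < m\<close> by (simp add: w_def lam_def)
  have "q * r = s * (q - 1)"
    by (simp add: q_def r_def mult.commute flip: conj_exp_divide[OF p(1)])
  moreover have "q * m * (s - 1) / s * lam = q * ((s - 1) * m + (r - 1)) / s"
    using \<open>0 < m\<close> \<open>1 < s\<close> by (simp add: lam_def field_simps)
  ultimately have coefficient: "1 - q * (m + 1) + q * m * (s - 1) / s * lam = - q * (m + 1) / s"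
    using \<open>1 < s\<close> by (simp add: field_simps)
  have "w * B powr s - q * w * ((m + 1) * B - m * B') * B powr (s - 1)
      = w * B powr s * (1 - q * (m + 1)) + q * w * m * (B powr (s - 1) * B')"
    using B_powr by (simp add: algebra_simps)
  also have "\<dots> \<le> w * B powr s * (1 - q * (m + 1))
      + q * w * m * ((s - 1) / s * lam * B powr s + lam powr (1 - s) / s * B' powr s)"
    using Young \<open>0 < q\<close> \<open>0 < m\<close> by (intro add_left_mono mult_left_mono) (auto simp: w_def)
  also have "\<dots> = w * B powr s * (1 - q * (m + 1) + q * m * (s - 1) / s * lam)
      + q / s * m * (w * lam powr (1 - s)) * B' powr s"
    by (simp add: algebra_simps)
  also have "\<dots> \<le> w * B powr s * (- q * (m + 1) / s) + q / s * m * m powr (r - 1) * B' powr s"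
    unfolding coefficient using weight \<open>0 < q\<close> \<open>1 < s\<close> \<open>0 < m\<close>
    by (intro add_left_mono mult_right_mono mult_left_mono) auto
  also have "\<dots> = q / s * (m * m powr (r - 1) * B' powr s - (m + 1) * w * B powr s)"
    using \<open>1 < s\<close> by (simp add: field_simps)
  also have "\<dots> = q / s * (m powr r * B' powr s - (m + 1) powr r * B powr s)"
    using \<open>0 < m\<close> powr_mult_base[of m "r - 1"] powr_mult_base[of "m + 1" "r - 1"]
    by (simp add: w_def)
  finally show ?thesis by (simp add: q_def r_def w_def)
qed

text \<open>For \<open>B = b (m + 1)\<close> and \<open>B' = b m\<close>,
  where \<open>b\<close> is the Cesaro mean of \<open>a\<close>, the factor \<open>(m + 1) * B - m * B'\<close> is \<open>a (m + 1)\<close>,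
  and the right-hand side telescopes in \<open>m\<close>.\<close>
lemma hardy_step:
  fixes p s m B B' :: real
  assumes p: "1 < p" "p \<le> s" and "0 \<le> m" "0 \<le> B" "0 \<le> B'"
  shows "(m + 1) powr (s / p - 1) * B powr s
           - conj_exp p * (m + 1) powr (s / p - 1) * ((m + 1) * B - m * B') * B powr (s - 1)
         \<le> conj_exp p / s * (m powr (s / p) * B' powr s - (m + 1) powr (s / p) * B powr s)"
proof (cases "m = 0")
  case True
  have "(1 - conj_exp p) * B powr s \<le> - conj_exp p / s * B powr s"
    using one_minus_conj_exp_le[OF p] by (rule mult_right_mono) simp
  then show ?thesis
    using True powr_eq_mult_powr_minus_one[of B s] assms by (simp add: algebra_simps)
next
  case False
  then show ?thesis
    using hardy_step_pos[OF p] assms by simp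
qed

lemma hardy_inequality_partial:
  assumes p: "1 < p" "p \<le> s" and a: "\<And>k. 1 \<le> k \<Longrightarrow> 0 \<le> a k"
  shows "(\<Sum>n=1..N. lorentz_summand p s (cesaro_mean a) n)
           \<le> conj_exp p powr s * (\<Sum>n=1..N. lorentz_summand p s a n)"
proof -
  define q where "q = conj_exp p"
  define b where "b = cesaro_mean a"
  define w where "w n = real n powr (s / p - 1)" for n
  define F where "F n = real n powr (s / p) * b n powr s" for n
  have "1 < s" "0 < q" using p by (simp_all add: q_def conj_exp_pos)
  have b: "0 \<le> b n" for n
    unfolding b_def using a by (rule cesaro_mean_nonneg)
  have step: "w n * b n powr s - q * w n * a n * b n powr (s - 1) \<le> q / s * (F (n - 1) - F n)"
    if "1 \<le> n" for n
    using hardy_step[OF p _ b b, of "real (n - 1)" n "n - 1"] cesaro_mean_increment[OF that, of a] that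
    by (simp add: q_def w_def F_def b_def of_nat_diff)
  have Young: "q * w n * a n * b n powr (s - 1) \<le> w n * ((s - 1) / s * b n powr s + q powr s / s * a n powr s)"
    if "1 \<le> n" for n
    using mult_left_mono[OF Youngs_inequality_conj[OF \<open>1 < s\<close> \<open>0 < q\<close> a[OF that] b], of "w n"]
    by (simp add: w_def algebra_simps)
  define S where "S = (\<Sum>n=1..N. w n * b n powr s)"
  define R where "R = (\<Sum>n=1..N. w n * a n powr s)"
  have "S - (\<Sum>n=1..N. q * w n * a n * b n powr (s - 1)) \<le> (\<Sum>n=1..N. q / s * (F (n - 1) - F n))"
    unfolding S_def sum_subtractf[symmetric] by (intro sum_mono step) simp
  also have "\<dots> = q / s * (\<Sum>n=1..N. F (n - 1) - F n)"
    by (rule sum_distrib_left[symmetric])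
  also have "\<dots> = q / s * (F 0 - F N)"
    using sum_telescope''[of 0 N F] by (simp add: sum_subtractf)
  also have "\<dots> \<le> 0"
    using \<open>0 < q\<close> \<open>1 < s\<close> by (simp add: F_def mult_nonpos_nonneg)
  finally have "S \<le> (\<Sum>n=1..N. q * w n * a n * b n powr (s - 1))" by simp
  also have "\<dots> \<le> (\<Sum>n=1..N. w n * ((s - 1) / s * b n powr s + q powr s / s * a n powr s))"
    by (intro sum_mono Young) simp
  also have "\<dots> = (s - 1) / s * S + q powr s / s * R"
    by (simp add: S_def R_def sum_distrib_left sum.distrib algebra_simps)
  finally have "S \<le> q powr s * R"
    using \<open>1 < s\<close> by (simp add: field_simps)
  then show ?thesis
    by (simp add: S_def R_def w_def b_def q_def lorentz_summand_def)
qed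

lemma hardy_inequality:
  assumes p: "1 < p" "p \<le> s" and a: "\<And>k. 1 \<le> k \<Longrightarrow> 0 \<le> a k"
    and summable: "summable (\<lambda>n. lorentz_summand p s a (Suc n))"
  shows "summable (\<lambda>n. lorentz_summand p s (cesaro_mean a) (Suc n))"
    and "(\<Sum>n. lorentz_summand p s (cesaro_mean a) (Suc n))
           \<le> conj_exp p powr s * (\<Sum>n. lorentz_summand p s a (Suc n))"
proof -
  have partial: "(\<Sum>n<N. lorentz_summand p s (cesaro_mean a) (Suc n))
      \<le> conj_exp p powr s * (\<Sum>n. lorentz_summand p s a (Suc n))" for N
  proof -
    have "(\<Sum>n<N. lorentz_summand p s (cesaro_mean a) (Suc n))
        \<le> conj_exp p powr s * (\<Sum>n<N. lorentz_summand p s a (Suc n))"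
      using hardy_inequality_partial[OF p a] by (simp add: sum.atLeast1_atMost_eq)
    also have "\<dots> \<le> conj_exp p powr s * (\<Sum>n. lorentz_summand p s a (Suc n))"
      by (intro mult_left_mono sum_le_suminf summable) (auto simp: lorentz_summand_nonneg)
    finally show ?thesis .
  qed
  show "summable (\<lambda>n. lorentz_summand p s (cesaro_mean a) (Suc n))"
    by (rule summableI_nonneg_bounded[OF lorentz_summand_nonneg partial])
  then show "(\<Sum>n. lorentz_summand p s (cesaro_mean a) (Suc n))
      \<le> conj_exp p powr s * (\<Sum>n. lorentz_summand p s a (Suc n))"
    using partial by (rule suminf_le_const)
qed

section \<open>The lower bound\<close>

text \<open>The lower bound for the indicator sequence of \<open>{1..j}\<close>, whose Cesaro mean at \<open>n\<close>
  is \<open>min n j / n\<close>.\<close>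
lemma zeta_indicator_bound:
  assumes p: "1 < p" "p \<le> s" and j: "1 \<le> j"
  defines "al \<equiv> s / conj_exp p + 1"
  shows "zeta_real al * (\<Sum>k=1..j. real k powr (s / p - 1))
           \<le> (\<Sum>n. real (Suc n) powr - al * real (min (Suc n) j) powr s)"
proof -
  define r where "r = s / p"
  define G where "G = (\<lambda>n. real (Suc n) powr - al * real (min (Suc n) j) powr s)"
  define W where "W = (\<Sum>k=1..j. real k powr (r - 1))"
  have "1 < s" "1 \<le> r" "1 < al" "s - al = r - 1"
    using p by (simp_all add: al_def r_def divide_conj_exp field_simps)
  have summable: "summable G"
    using summable_powr_min[OF \<open>1 < al\<close>] \<open>1 < s\<close> by (simp add: G_def)
  have head: "(\<Sum>n<j. G n) = W"
  proof -
    have "G n = real (Suc n) powr (r - 1)" if "n < j" for n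
      using that \<open>s - al = r - 1\<close> by (simp add: G_def min_absorb1 flip: powr_add)
    then show ?thesis
      by (simp add: W_def sum.atLeast1_atMost_eq)
  qed
  have "real j powr r * (zeta_real al - 1) = real j powr s * (real j powr (1 - al) * (zeta_real al - 1))"
    using j \<open>s - al = r - 1\<close> by (simp add: powr_add[symmetric] algebra_simps)
  also have "\<dots> \<le> real j powr s * (\<Sum>n. real (n + j + 1) powr - al)"
    using zeta_real_tail_ge[OF \<open>1 < al\<close> j] by (simp add: mult_left_mono)
  also have "\<dots> = (\<Sum>n. G (n + j))"
    using summable_powr_shift[OF \<open>1 < al\<close>, of "j + 1"]
    by (simp add: G_def suminf_mult[symmetric] add.assoc min_absorb2 mult.commute)
  finally have tail: "real j powr r * (zeta_real al - 1) \<le> (\<Sum>n. G (n + j))" .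
  have "W \<le> real j powr r"
    using sum_powr_le[of "r - 1" j] \<open>1 \<le> r\<close> by (simp add: W_def)
  then have "W * (zeta_real al - 1) \<le> real j powr r * (zeta_real al - 1)"
    using zeta_real_ge_one[OF \<open>1 < al\<close>] by (intro mult_right_mono) simp_all
  then have "zeta_real al * W \<le> (\<Sum>n. G (n + j)) + (\<Sum>n<j. G n)"
    using tail head by (simp add: algebra_simps)
  then show ?thesis
    using suminf_split_initial_segment[OF summable, of j] unfolding G_def by (simp add: W_def r_def)
qed

lemma lorentz_summand_cesaro_mean_ge_layers:
  assumes p: "1 < p" "p \<le> s" and a: "\<And>k. 1 \<le> k \<Longrightarrow> 0 \<le> a k"
    and anti: "\<And>i j. 1 \<le> i \<Longrightarrow> i \<le> j \<Longrightarrow> a j \<le> a i"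
    and vanish: "\<And>k. N < k \<Longrightarrow> a k = 0"
  shows "(\<Sum>j=1..N. (a j powr s - a (Suc j) powr s)
            * (real (Suc n) powr - (s / conj_exp p + 1) * real (min (Suc n) j) powr s))
           \<le> lorentz_summand p s (cesaro_mean a) (Suc n)"
proof -
  define al where "al = s / conj_exp p + 1"
  have "1 \<le> s" using p by simp
  have "(\<Sum>j=1..N. (a j powr s - a (Suc j) powr s) * (real (Suc n) powr - al * real (min (Suc n) j) powr s))
      = real (Suc n) powr - al * (\<Sum>j=1..N. (a j powr s - a (Suc j) powr s) * real (min (Suc n) j) powr s)"
    by (simp add: sum_distrib_left algebra_simps)
  also have "\<dots> \<le> real (Suc n) powr - al * (\<Sum>k=1..Suc n. a k) powr s"
    using \<open>1 \<le> s\<close> a anti vanish by (intro mult_left_mono sum_layers_powr_le) auto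
  also have "\<dots> = lorentz_summand p s (cesaro_mean a) (Suc n)"
    using lorentz_summand_cesaro_mean[OF p(1), of "Suc n" a s] sum_nonneg[of "{1..Suc n}" a] a
    by (simp add: al_def)
  finally show ?thesis by (simp add: al_def)
qed

text \<open>Writing \<open>a powr s\<close> as a sum of layers \<open>a j powr s - a (j + 1) powr s\<close> reduces the estimate
  to indicators of the segments \<open>{1..j}\<close>, that is, to \<open>zeta_indicator_bound\<close>.\<close>
lemma zeta_lorentz_finite_le:
  assumes p: "1 < p" "p \<le> s" and a: "\<And>k. 1 \<le> k \<Longrightarrow> 0 \<le> a k"
    and anti: "\<And>i j. 1 \<le> i \<Longrightarrow> i \<le> j \<Longrightarrow> a j \<le> a i"
    and vanish: "\<And>k. N < k \<Longrightarrow> a k = 0"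
    and summable: "summable (\<lambda>n. lorentz_summand p s (cesaro_mean a) (Suc n))"
  shows "zeta_real (s / conj_exp p + 1) * (\<Sum>k=1..N. lorentz_summand p s a k)
           \<le> (\<Sum>n. lorentz_summand p s (cesaro_mean a) (Suc n))"
proof -
  define al where "al = s / conj_exp p + 1"
  define d where "d j = a j powr s - a (Suc j) powr s" for j
  define g where "g j = (\<lambda>n. real (Suc n) powr - al * real (min (Suc n) j) powr s)" for j
  have "1 \<le> s" using p by simp
  have d: "0 \<le> d j" if "1 \<le> j" for j
    using a[of "Suc j"] anti[of j "Suc j"] that \<open>1 \<le> s\<close> by (simp add: d_def powr_mono2)
  have "1 < al"
    using p by (simp add: al_def divide_conj_exp field_simps)
  have g: "summable (g j)" "zeta_real al * (\<Sum>k=1..j. real k powr (s / p - 1)) \<le> suminf (g j)"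
    if "1 \<le> j" for j
    using summable_powr_min[OF \<open>1 < al\<close>] zeta_indicator_bound[OF p that] \<open>1 \<le> s\<close>
    by (simp_all add: g_def al_def)
  have layers_le: "(\<Sum>j=1..N. d j * g j n) \<le> lorentz_summand p s (cesaro_mean a) (Suc n)" for n
    using lorentz_summand_cesaro_mean_ge_layers[OF p a anti vanish] by (simp add: d_def g_def al_def)
  have "zeta_real al * (\<Sum>k=1..N. lorentz_summand p s a k)
      = zeta_real al * (\<Sum>j=1..N. d j * (\<Sum>k=1..j. real k powr (s / p - 1)))"
    unfolding lorentz_summand_def d_def using vanish \<open>1 \<le> s\<close>
    by (subst sum_mult_layer_decomposition[of N]) (simp_all add: mult.commute)
  also have "\<dots> = (\<Sum>j=1..N. d j * (zeta_real al * (\<Sum>k=1..j. real k powr (s / p - 1))))"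
    by (simp add: sum_distrib_left mult_ac)
  also have "\<dots> \<le> (\<Sum>j=1..N. d j * suminf (g j))"
    using g d by (intro sum_mono mult_left_mono) auto
  also have "\<dots> = (\<Sum>j=1..N. \<Sum>n. d j * g j n)"
    using g by (intro sum.cong refl suminf_mult[symmetric]) auto
  also have "\<dots> = (\<Sum>n. \<Sum>j=1..N. d j * g j n)"
    using g by (intro suminf_sum[symmetric] summable_mult) auto
  also have "\<dots> \<le> (\<Sum>n. lorentz_summand p s (cesaro_mean a) (Suc n))"
    using g layers_le summable by (intro suminf_le summable_sum summable_mult) auto
  finally show ?thesis by (simp add: al_def)
qed

lemma zeta_lorentz_partial_le:
  assumes p: "1 < p" "p \<le> s" and a: "\<And>k. 1 \<le> k \<Longrightarrow> 0 \<le> a k"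
    and anti: "\<And>i j. 1 \<le> i \<Longrightarrow> i \<le> j \<Longrightarrow> a j \<le> a i"
    and summable: "summable (\<lambda>n. lorentz_summand p s (cesaro_mean a) (Suc n))"
  shows "zeta_real (s / conj_exp p + 1) * (\<Sum>k=1..N. lorentz_summand p s a k)
           \<le> (\<Sum>n. lorentz_summand p s (cesaro_mean a) (Suc n))"
proof -
  define b where "b k = (if k \<le> N then a k else 0)" for k
  define M where "M c = (\<lambda>n. lorentz_summand p s (cesaro_mean c) (Suc n))" for c
  have b: "0 \<le> b k" "b k \<le> a k" if "1 \<le> k" for k
    using a that by (simp_all add: b_def)
  have M_le: "M b n \<le> M a n" for n
    using b cesaro_mean_nonneg[of b] p by (simp add: M_def lorentz_summand_mono cesaro_mean_mono)
  have summable_M: "summable (M a)"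
    using summable by (simp add: M_def)
  have "summable (M b)"
    using M_le by (intro summable_comparison_test'[OF summable_M]) (simp add: M_def lorentz_summand_def)
  have "(\<Sum>k=1..N. lorentz_summand p s a k) = (\<Sum>k=1..N. lorentz_summand p s b k)"
    by (intro sum.cong) (simp_all add: b_def lorentz_summand_def)
  also have "zeta_real (s / conj_exp p + 1) * \<dots> \<le> suminf (M b)"
    unfolding M_def using \<open>summable (M b)\<close> b a anti
    by (intro zeta_lorentz_finite_le[OF p]) (auto simp: b_def M_def)
  also have "\<dots> \<le> suminf (M a)"
    using M_le \<open>summable (M b)\<close> summable_M by (rule suminf_le)
  finally show ?thesis
    by (simp add: M_def)
qed

lemma zeta_lorentz_le:
  assumes p: "1 < p" "p \<le> s" and a: "\<And>k. 1 \<le> k \<Longrightarrow> 0 \<le> a k"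
    and anti: "\<And>i j. 1 \<le> i \<Longrightarrow> i \<le> j \<Longrightarrow> a j \<le> a i"
    and summable: "summable (\<lambda>n. lorentz_summand p s a (Suc n))"
  shows "zeta_real (s / conj_exp p + 1) * (\<Sum>n. lorentz_summand p s a (Suc n))
           \<le> (\<Sum>n. lorentz_summand p s (cesaro_mean a) (Suc n))"
proof -
  define z where "z = zeta_real (s / conj_exp p + 1)"
  have "(\<Sum>n<N. z * lorentz_summand p s a (Suc n)) \<le> (\<Sum>n. lorentz_summand p s (cesaro_mean a) (Suc n))"
    for N
    using zeta_lorentz_partial_le[OF p a anti hardy_inequality(1)[OF p a summable], of N]
    by (simp add: z_def sum_distrib_left sum.atLeast1_atMost_eq)
  with summable_mult[OF summable] have "(\<Sum>n. z * lorentz_summand p s a (Suc n))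
      \<le> (\<Sum>n. lorentz_summand p s (cesaro_mean a) (Suc n))"
    by (rule suminf_le_const)
  then show ?thesis
    using suminf_mult[OF summable, of z] by (simp add: z_def)
qed

section \<open>Lorentz norms of sequences\<close>

lemma rearr_nonneg_antimono:
  fixes x :: "nat \<Rightarrow> complex"
  assumes "Bseq x"
  shows rearr_nonneg: "1 \<le> n \<Longrightarrow> 0 \<le> rearr x n"
    and rearr_antimono: "1 \<le> i \<Longrightarrow> i \<le> j \<Longrightarrow> rearr x j \<le> rearr x i"
proof -
  define T where "T n = {t. 0 \<le> t \<and> finite (dist_count x t) \<and> card (dist_count x t) < n}" for n
  obtain K where "0 < K" "\<And>k. norm (x k) \<le> K"
    using assms by (auto elim: BseqE)
  then have "dist_count x K = {}"
    by (auto simp: dist_count_def not_less)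
  then have K: "K \<in> T n" if "1 \<le> n" for n
    using \<open>0 < K\<close> that by (simp add: T_def)
  have "bdd_below (T n)" for n
    by (rule bdd_belowI[of _ 0]) (simp add: T_def)
  show "0 \<le> rearr x n" if "1 \<le> n"
    unfolding rearr_def T_def[symmetric] using K[OF that] by (intro cInf_greatest) (auto simp: T_def)
  show "rearr x j \<le> rearr x i" if "1 \<le> i" "i \<le> j"
  proof -
    have "T i \<subseteq> T j" using that by (auto simp: T_def)
    then show ?thesis
      unfolding rearr_def T_def[symmetric]
      using K[OF that(1)] \<open>bdd_below (T j)\<close> by (intro cInf_superset_mono) auto
  qed
qed

lemma rearr_eq_norm:
  fixes x :: "nat \<Rightarrow> complex"
  assumes anti: "\<And>i j. 1 \<le> i \<Longrightarrow> i \<le> j \<Longrightarrow> norm (x j) \<le> norm (x i)" and "1 \<le> n"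
  shows "rearr x n = norm (x n)"
proof -
  have "t \<in> {t. 0 \<le> t \<and> finite (dist_count x t) \<and> card (dist_count x t) < n} \<longleftrightarrow> norm (x n) \<le> t"
    for t
  proof
    assume t: "t \<in> {t. 0 \<le> t \<and> finite (dist_count x t) \<and> card (dist_count x t) < n}"
    show "norm (x n) \<le> t"
    proof (rule ccontr)
      assume "\<not> norm (x n) \<le> t"
      then have "{1..n} \<subseteq> dist_count x t"
        using anti by (force simp: dist_count_def)
      then have "card {1..n} \<le> card (dist_count x t)"
        using t by (intro card_mono) auto
      then show False using t by simp
    qed
  next
    assume t: "norm (x n) \<le> t"
    have "dist_count x t \<subseteq> {1..<n}"
    proof
      fix k assume k: "k \<in> dist_count x t"
      then have "\<not> n \<le> k" using anti[of n k] t \<open>1 \<le> n\<close> by (auto simp: dist_count_def)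
      then show "k \<in> {1..<n}" using k by (simp add: dist_count_def)
    qed
    then show "t \<in> {t. 0 \<le> t \<and> finite (dist_count x t) \<and> card (dist_count x t) < n}"
      using t \<open>1 \<le> n\<close> card_mono[of "{1..<n}" "dist_count x t"] order_trans[OF norm_ge_zero t]
      by (auto intro: finite_subset)
  qed
  then have "{t. 0 \<le> t \<and> finite (dist_count x t) \<and> card (dist_count x t) < n} = {norm (x n)..}"
    by auto
  then show ?thesis
    by (simp add: rearr_def)
qed

lemma lorentz_norm_nonneg: "0 \<le> lorentz_norm p s x"
  by (simp add: lorentz_norm_def)

lemma lorentz_terms_eq: "lorentz_terms p s x = (\<lambda>n. lorentz_summand p s (rearr x) (Suc n))"
  by (simp add: fun_eq_iff lorentz_terms_def lorentz_summand_def)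

lemma max_lorentz_terms_eq:
  "max_lorentz_terms p s x = (\<lambda>n. lorentz_summand p s (cesaro_mean (rearr x)) (Suc n))"
  by (simp add: fun_eq_iff max_lorentz_terms_def lorentz_summand_def cesaro_mean_def)

lemma in_lorentz_Bseq:
  assumes "in_lorentz p s x"
  shows "Bseq x"
proof -
  have "Bseq (\<lambda>n. norm (x n))"
    using assms by (auto simp: in_lorentz_def intro: convergent_imp_Bseq convergentI)
  then show ?thesis
    by (simp add: Bseq_def)
qed

lemma summable_max_lorentz_terms:
  assumes p: "1 < p" "p \<le> s" and x: "in_lorentz p s x"
  shows "summable (max_lorentz_terms p s x)"
  using hardy_inequality(1)[OF p rearr_nonneg[OF in_lorentz_Bseq[OF x]]] x
  by (simp add: in_lorentz_def lorentz_terms_eq max_lorentz_terms_eq)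

lemma max_lorentz_norm_bounds:
  assumes p: "1 < p" "p \<le> s" and x: "in_lorentz p s x"
  shows "zeta_real (s / conj_exp p + 1) powr (1 / s) * lorentz_norm p s x \<le> max_lorentz_norm p s x"
    and "max_lorentz_norm p s x \<le> conj_exp p * lorentz_norm p s x"
proof -
  define a where "a = rearr x"
  define R where "R = (\<Sum>n. lorentz_summand p s a (Suc n))"
  define M where "M = (\<Sum>n. lorentz_summand p s (cesaro_mean a) (Suc n))"
  define z where "z = zeta_real (s / conj_exp p + 1)"
  have a: "0 \<le> a k" if "1 \<le> k" for k
    using rearr_nonneg[OF in_lorentz_Bseq[OF x] that] by (simp add: a_def)
  have anti: "a j \<le> a i" if "1 \<le> i" "i \<le> j" for i j
    using rearr_antimono[OF in_lorentz_Bseq[OF x] that] by (simp add: a_def)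
  have summable: "summable (\<lambda>n. lorentz_summand p s a (Suc n))"
    using x by (simp add: in_lorentz_def lorentz_terms_eq a_def)
  have "0 < s" "0 < conj_exp p" "1 \<le> z"
    using p by (simp_all add: conj_exp_pos z_def zeta_real_ge_one divide_conj_exp field_simps)
  have "0 \<le> R" "0 \<le> M"
    unfolding R_def M_def using summable hardy_inequality(1)[OF p a summable]
    by (simp_all add: suminf_nonneg lorentz_summand_nonneg)
  have norms: "lorentz_norm p s x = R powr (1 / s)" "max_lorentz_norm p s x = M powr (1 / s)"
    by (simp_all add: lorentz_norm_def max_lorentz_norm_def lorentz_terms_eq max_lorentz_terms_eq
        R_def M_def a_def)
  have "z powr (1 / s) * R powr (1 / s) = (z * R) powr (1 / s)"
    using \<open>1 \<le> z\<close> \<open>0 \<le> R\<close> by (simp add: powr_mult)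
  also have "\<dots> \<le> M powr (1 / s)"
    using zeta_lorentz_le[OF p a anti summable] \<open>1 \<le> z\<close> \<open>0 \<le> R\<close> \<open>0 < s\<close>
    by (intro powr_mono2) (simp_all add: z_def R_def M_def)
  finally show "z powr (1 / s) * lorentz_norm p s x \<le> max_lorentz_norm p s x"
    using norms by simp
  have "M powr (1 / s) \<le> (conj_exp p powr s * R) powr (1 / s)"
    using hardy_inequality(2)[OF p a summable] \<open>0 \<le> M\<close> \<open>0 < s\<close>
    by (intro powr_mono2) (simp_all add: R_def M_def)
  also have "\<dots> = conj_exp p * R powr (1 / s)"
    using \<open>0 \<le> R\<close> \<open>0 < s\<close> \<open>0 < conj_exp p\<close> by (simp add: powr_mult powr_powr)
  finally show "max_lorentz_norm p s x \<le> conj_exp p * lorentz_norm p s x"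
    using norms by simp
qed

section \<open>Optimality of the constants\<close>

lemma unit_vector_norms:
  fixes p s :: real
  assumes p: "1 < p" "p \<le> s"
  defines "e \<equiv> (\<lambda>k. if k = 1 then 1 else 0) :: nat \<Rightarrow> complex"
  shows "in_lorentz p s e" and "lorentz_norm p s e = 1"
    and "max_lorentz_norm p s e = zeta_real (s / conj_exp p + 1) powr (1 / s)"
proof -
  have rearr: "rearr e k = (if k = 1 then 1 else 0)" if "1 \<le> k" for k
    using rearr_eq_norm[of e k] that by (simp add: e_def)
  have "lorentz_terms p s e = (\<lambda>n. if n = 0 then 1 else 0)"
    using p rearr by (simp add: fun_eq_iff lorentz_terms_eq lorentz_summand_def)
  then have "lorentz_terms p s e sums 1"
    using sums_single[of 0 "\<lambda>_. 1 :: real"] by simp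
  moreover have "(\<lambda>n. norm (e n)) \<longlonglongrightarrow> 0"
    by (rule tendsto_eventually) (auto simp: e_def eventually_sequentially intro!: exI[of _ 2])
  ultimately show "in_lorentz p s e" and "lorentz_norm p s e = 1"
    by (auto simp: in_lorentz_def lorentz_norm_def sums_iff)
  have "(\<Sum>k=1..Suc n. rearr e k) = 1" for n
    using rearr by (induction n) simp_all
  then have "max_lorentz_terms p s e = (\<lambda>n. real (Suc n) powr - (s / conj_exp p + 1))"
    using lorentz_summand_cesaro_mean[OF p(1), of "Suc _" "rearr e"]
    by (simp add: fun_eq_iff max_lorentz_terms_eq)
  then show "max_lorentz_norm p s e = zeta_real (s / conj_exp p + 1) powr (1 / s)"
    unfolding max_lorentz_norm_def zeta_real_def powr_minus_divide by simp
qed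

lemma zeta_constant_optimal:
  assumes p: "1 < p" "p \<le> s"
    and c: "\<forall>x. in_lorentz p s x \<longrightarrow> c * lorentz_norm p s x \<le> max_lorentz_norm p s x"
  shows "c \<le> zeta_real (s / conj_exp p + 1) powr (1 / s)"
  using c unit_vector_norms[OF p] by fastforce

text \<open>If \<open>A\<close> is at least the integral comparison for the partial sum \<open>\<Sum>k=1..m. k powr (-1/p)\<close>,
  the right-hand side is the \<open>m\<close>-th summand of the maximal norm of \<open>k powr (-1/p)\<close>.\<close>
lemma lorentz_summand_power_lower:
  fixes p s m A :: real
  assumes p: "1 < p" "p \<le> s" and "1 \<le> m" and A: "conj_exp p * (m powr (1 - 1 / p) - 1) \<le> A"
  shows "conj_exp p powr s * (1 / m - s * m powr - (2 - 1 / p)) \<le> m powr (s / p - 1) * (A / m) powr s"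
proof -
  define q where "q = conj_exp p"
  define t where "t = m powr - (1 - 1 / p)"
  have "0 < q" "1 \<le> s" "0 < m" using p \<open>1 \<le> m\<close> by (simp_all add: q_def conj_exp_pos)
  have "1 \<le> m powr (1 - 1 / p)"
    using \<open>1 \<le> m\<close> p by (intro ge_one_powr_ge_zero) auto
  then have "0 < t" "t \<le> 1"
    unfolding t_def powr_minus_divide using \<open>0 < m\<close> by simp_all
  have factor: "m powr (1 - 1 / p) - 1 = m powr (1 - 1 / p) * (1 - t)"
    using \<open>0 < m\<close> by (simp add: t_def algebra_simps flip: powr_add)
  have split: "m powr (1 - 1 / p) = m * m powr (- 1 / p)"
    using \<open>0 < m\<close> powr_mult_base[of m "- 1 / p"] by simp
  have "q * m powr (- 1 / p) * (1 - t) * m = q * (m powr (1 - 1 / p) - 1)"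
    unfolding factor unfolding split by (simp add: mult_ac)
  then have "q * m powr (- 1 / p) * (1 - t) * m \<le> A"
    using A by (simp only: q_def)
  then have "(q * m powr (- 1 / p)) * (1 - t) \<le> A / m"
    using \<open>0 < m\<close> by (simp add: pos_le_divide_eq)
  then have "(q * m powr (- 1 / p)) powr s * (1 - s * t) \<le> (A / m) powr s"
    using \<open>1 \<le> s\<close> \<open>0 < q\<close> \<open>0 < t\<close> \<open>t \<le> 1\<close> by (intro mult_powr_Bernoulli_le) auto
  then have "m powr (s / p - 1) * (q powr s * m powr (- s / p) * (1 - s * t))
      \<le> m powr (s / p - 1) * (A / m) powr s"
    using \<open>0 < q\<close> by (simp add: powr_mult powr_powr mult_left_mono)
  moreover have inv: "m powr (s / p - 1) * m powr (- s / p) = 1 / m"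
    using powr_minus_divide[of m 1] \<open>0 < m\<close> unfolding powr_add[symmetric] by simp
  moreover have "1 / m * t = m powr - (2 - 1 / p)"
    using powr_minus_divide[of m 1] \<open>0 < m\<close> unfolding t_def inv[symmetric] powr_add[symmetric] by simp
  then have "m powr - (2 - 1 / p) = t / m"
    by simp
  ultimately show ?thesis
    by (simp add: q_def algebra_simps)
qed

definition truncated_power_seq :: "real \<Rightarrow> nat \<Rightarrow> nat \<Rightarrow> complex" where
  "truncated_power_seq p N k = (if 1 \<le> k \<and> k \<le> N then complex_of_real (real k powr (- 1 / p)) else 0)"

lemma rearr_truncated_power_seq:
  assumes "0 < p" "1 \<le> k"
  shows "rearr (truncated_power_seq p N) k = (if k \<le> N then real k powr (- 1 / p) else 0)"
proof -
  have "norm (truncated_power_seq p N j) \<le> norm (truncated_power_seq p N i)" if "1 \<le> i" "i \<le> j" for i j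
    using that assms by (auto simp: truncated_power_seq_def intro: powr_mono2')
  then show ?thesis
    using rearr_eq_norm[of "truncated_power_seq p N" k] assms
    by (simp add: truncated_power_seq_def)
qed

lemma truncated_power_seq_lorentz_norm:
  assumes p: "1 < p" "p \<le> s"
  shows "in_lorentz p s (truncated_power_seq p N)"
    and "lorentz_norm p s (truncated_power_seq p N) = harm N powr (1 / s)"
proof -
  have "lorentz_terms p s (truncated_power_seq p N) = (\<lambda>n. if n \<in> {..<N} then 1 / real (Suc n) else 0)"
  proof
    fix n
    have "real (Suc n) powr (s / p - 1) * (real (Suc n) powr (- 1 / p)) powr s = real (Suc n) powr (-1)"
      by (simp add: powr_powr field_simps flip: powr_add)
    then show "lorentz_terms p s (truncated_power_seq p N) n = (if n \<in> {..<N} then 1 / real (Suc n) else 0)"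
      using p by (simp add: lorentz_terms_eq lorentz_summand_def rearr_truncated_power_seq powr_minus_divide)
  qed
  then have "lorentz_terms p s (truncated_power_seq p N) sums harm N"
    using sums_If_finite_set[of "{..<N}" "\<lambda>n. 1 / real (Suc n)"]
    by (simp add: harm_altdef inverse_eq_divide)
  moreover have "(\<lambda>n. norm (truncated_power_seq p N n)) \<longlonglongrightarrow> 0"
    by (rule tendsto_eventually)
      (auto simp: truncated_power_seq_def eventually_sequentially intro!: exI[of _ "Suc N"])
  ultimately show "in_lorentz p s (truncated_power_seq p N)"
    and "lorentz_norm p s (truncated_power_seq p N) = harm N powr (1 / s)"
    by (auto simp: in_lorentz_def lorentz_norm_def sums_iff)
qed

lemma max_lorentz_terms_truncated_power_seq_ge:
  assumes p: "1 < p" "p \<le> s" and "n < N"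
  shows "conj_exp p powr s * (1 / real (Suc n) - s * real (Suc n) powr - (2 - 1 / p))
           \<le> max_lorentz_terms p s (truncated_power_seq p N) n"
proof -
  define g where "g = 1 - 1 / p"
  have "0 < g" "g \<le> 1" "conj_exp p = 1 / g"
    using p by (simp_all add: g_def conj_exp_def field_simps)
  have "(real (Suc n) powr g - 1) / g \<le> (real (Suc n + 1) powr g - 1) / g"
    using \<open>0 < g\<close> by (intro divide_right_mono diff_right_mono powr_mono2) auto
  also have "\<dots> \<le> (\<Sum>k=1..Suc n. real k powr (g - 1))"
    using sum_powr_ge_integral[OF \<open>0 < g\<close> \<open>g \<le> 1\<close>] by blast
  also have "\<dots> = (\<Sum>k=1..Suc n. rearr (truncated_power_seq p N) k)"
    using p \<open>n < N\<close> by (intro sum.cong) (simp_all add: rearr_truncated_power_seq g_def)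
  finally have "conj_exp p * (real (Suc n) powr g - 1) \<le> (\<Sum>k=1..Suc n. rearr (truncated_power_seq p N) k)"
    using \<open>conj_exp p = 1 / g\<close> by simp
  then show ?thesis
    using lorentz_summand_power_lower[OF p] by (simp add: max_lorentz_terms_def g_def)
qed

lemma truncated_power_seq_max_lorentz_norm_ge:
  assumes p: "1 < p" "p \<le> s"
  shows "conj_exp p powr s * (harm N - s * (\<Sum>n. real (n + 1) powr - (2 - 1 / p)))
           \<le> max_lorentz_norm p s (truncated_power_seq p N) powr s"
proof -
  define x where "x = truncated_power_seq p N"
  have "1 < s" "1 < 2 - 1 / p" using p by (simp_all add: field_simps)
  have summable: "summable (max_lorentz_terms p s x)"
    using summable_max_lorentz_terms[OF p truncated_power_seq_lorentz_norm(1)[OF p]] by (simp add: x_def)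
  have "conj_exp p powr s * (harm N - s * (\<Sum>n. real (n + 1) powr - (2 - 1 / p)))
      \<le> conj_exp p powr s * (harm N - s * (\<Sum>n<N. real (Suc n) powr - (2 - 1 / p)))"
    using summable_powr_shift[OF \<open>1 < 2 - 1 / p\<close>, of 1] \<open>1 < s\<close>
    by (intro mult_left_mono) (simp_all add: sum_le_suminf)
  also have "\<dots> = (\<Sum>n<N. conj_exp p powr s * (1 / real (Suc n) - s * real (Suc n) powr - (2 - 1 / p)))"
    by (simp add: harm_altdef inverse_eq_divide sum_distrib_left sum_subtractf algebra_simps)
  also have "\<dots> \<le> (\<Sum>n<N. max_lorentz_terms p s x n)"
    unfolding x_def using max_lorentz_terms_truncated_power_seq_ge[OF p] by (intro sum_mono) simp
  also have "\<dots> \<le> suminf (max_lorentz_terms p s x)"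
    by (rule sum_le_suminf[OF summable]) (simp_all add: max_lorentz_terms_def)
  also have "\<dots> = max_lorentz_norm p s x powr s"
    using \<open>1 < s\<close> suminf_nonneg[OF summable]
    by (simp add: max_lorentz_norm_def powr_powr max_lorentz_terms_eq lorentz_summand_nonneg)
  finally show ?thesis
    by (simp add: x_def)
qed

lemma admissible_constant_harm_bound:
  assumes p: "1 < p" "p \<le> s" and "0 \<le> C"
    and C: "\<forall>x. in_lorentz p s x \<longrightarrow> max_lorentz_norm p s x \<le> C * lorentz_norm p s x"
  shows "(conj_exp p powr s - C powr s) * harm N
           \<le> conj_exp p powr s * s * (\<Sum>n. real (n + 1) powr - (2 - 1 / p))"
proof -
  define x where "x = truncated_power_seq p N"
  have "0 < s" using p by simp
  have "max_lorentz_norm p s x \<le> C * harm N powr (1 / s)"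
    using C[rule_format, OF truncated_power_seq_lorentz_norm(1)[OF p]] truncated_power_seq_lorentz_norm(2)[OF p]
    by (simp add: x_def)
  then have "max_lorentz_norm p s x powr s \<le> (C * harm N powr (1 / s)) powr s"
    using \<open>0 < s\<close> by (intro powr_mono2) (auto simp: max_lorentz_norm_def)
  also have "\<dots> = C powr s * harm N"
    using \<open>0 \<le> C\<close> \<open>0 < s\<close> by (simp add: powr_mult powr_powr harm_nonneg)
  finally show ?thesis
    using truncated_power_seq_max_lorentz_norm_ge[OF p, of N] by (simp add: x_def algebra_simps)
qed

lemma conj_exp_optimal:
  assumes p: "1 < p" "p \<le> s"
    and C: "\<forall>x. in_lorentz p s x \<longrightarrow> max_lorentz_norm p s x \<le> C * lorentz_norm p s x"
  shows "conj_exp p \<le> C"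
proof (rule ccontr)
  assume "\<not> conj_exp p \<le> C"
  define q where "q = conj_exp p"
  define C' where "C' = max C 0"
  define K where "K = (\<Sum>n. real (n + 1) powr - (2 - 1 / p))"
  have "0 < s" "0 \<le> C'" "C' < q"
    using p \<open>\<not> conj_exp p \<le> C\<close> conj_exp_pos[OF p(1)] by (auto simp: q_def C'_def)
  then have "C' powr s < q powr s"
    by (intro powr_less_mono2) auto
  have "max_lorentz_norm p s x \<le> C' * lorentz_norm p s x" if "in_lorentz p s x" for x
    using order_trans[OF C[rule_format, OF that] mult_right_mono[OF max.cobounded1 lorentz_norm_nonneg]]
    by (simp add: C'_def)
  then have bound: "(q powr s - C' powr s) * harm N \<le> q powr s * s * K" for N
    using admissible_constant_harm_bound[OF p \<open>0 \<le> C'\<close>] by (simp add: q_def K_def)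
  have "eventually (\<lambda>N. q powr s * s * K / (q powr s - C' powr s) + 1 \<le> harm N) sequentially"
    using harm_at_top by (simp add: filterlim_at_top)
  then obtain N where "q powr s * s * K / (q powr s - C' powr s) + 1 \<le> harm N"
    by (auto simp: eventually_sequentially)
  with bound[of N] \<open>C' powr s < q powr s\<close> show False
    by (simp add: field_simps)
qed

theorem corollary3p6:
  fixes p s :: real
  assumes "1 < p" and "p \<le> s"
  shows "(\<forall>x. in_lorentz p s x \<longrightarrow>
            zeta_real (s / conj_exp p + 1) powr (1 / s) * lorentz_norm p s x \<le> max_lorentz_norm p s x
          \<and> max_lorentz_norm p s x \<le> conj_exp p * lorentz_norm p s x)
       \<and> (\<forall>c. (\<forall>x. in_lorentz p s x \<longrightarrow> c * lorentz_norm p s x \<le> max_lorentz_norm p s x)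
              \<longrightarrow> c \<le> zeta_real (s / conj_exp p + 1) powr (1 / s))
       \<and> (\<forall>C. (\<forall>x. in_lorentz p s x \<longrightarrow> max_lorentz_norm p s x \<le> C * lorentz_norm p s x)
              \<longrightarrow> conj_exp p \<le> C)"
  using max_lorentz_norm_bounds[OF assms] zeta_constant_optimal[OF assms] conj_exp_optimal[OF assms]
  by blast

end
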